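(* Let $f:\mathbb{R}^n\to\mathbb{R}$ be a continuously differentiable convex function. Let $H$ be a diagonal matrix with nonnegative diagonal entries such that $f(y)\le f(x)+\nabla f(x)^T(y-x)+\tfrac12\|y-x\|_H^2$ for all $x,y$, and let $D$ be diagonal with $D\succ H$. Assume additionally that $f$ is $s$-restricted strongly convex. Let $(x_k)$ be a sequence generated by the IWHT method with $D$. Then the entire sequence $(x_k)$ converges.
   Context: $\|z\|_A^2=z^TAz$. $C_s=\{x\in\mathbb{R}^n:\|x\|_0\le s\}$ for a positive integer $s$, where $\|x\|_0$ is the number of nonzero entries. $\mathcal{P}_{C_s}(z)=\operatorname{argmin}_{y\in C_s}\|y-z\|_2^2$ (set-valued). IWHT with diagonal $D\succ0$: start from $x_0\in C_s$, pick $y_{k+1}\in\mathcal{P}_{C_s}\big(D^{1/2}x_k-D^{-1/2}\nabla f(x_k)\big)$ and set $x_{k+1}=D^{-1/2}y_{k+1}$. $f$ is $s$-restricted strongly convex if there is $\sigma_s>0$ with $f(y)\ge f(x)+\nabla f(x)^T(y-x)+\frac{\sigma_s}{2}\|x-y\|_2^2$ for all $x,y$ with $\|x-y\|_0\le s$. *)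

theory Defs
  imports "HOL-Analysis.Analysis"
begin

definition is_diag :: "real^'n^'n \<Rightarrow> bool" where
  "is_diag A \<longleftrightarrow> (\<forall>i j. i \<noteq> j \<longrightarrow> A $ i $ j = 0)"

definition pos_def :: "real^'n^'n \<Rightarrow> bool" where
  "pos_def A \<longleftrightarrow> (\<forall>z. z \<noteq> 0 \<longrightarrow> z \<bullet> (A *v z) > 0)"

definition wnorm2 :: "real^'n^'n \<Rightarrow> real^'n \<Rightarrow> real" where
  "wnorm2 A z = z \<bullet> (A *v z)"

definition diag_sqrt :: "real^'n^'n \<Rightarrow> real^'n^'n" where
  "diag_sqrt D = (\<chi> i j. if i = j then sqrt (D $ i $ i) else 0)"

definition diag_inv_sqrt :: "real^'n^'n \<Rightarrow> real^'n^'n" where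
  "diag_inv_sqrt D = (\<chi> i j. if i = j then 1 / sqrt (D $ i $ i) else 0)"

definition l0 :: "real^'n \<Rightarrow> nat" where
  "l0 x = card {i. x $ i \<noteq> 0}"

definition sparse_set :: "nat \<Rightarrow> (real^'n) set" where
  "sparse_set s = {x. l0 x \<le> s}"

definition proj_set :: "(real^'n) set \<Rightarrow> real^'n \<Rightarrow> (real^'n) set" where
  "proj_set S z = {y \<in> S. \<forall>y'\<in>S. (norm (y - z))\<^sup>2 \<le> (norm (y' - z))\<^sup>2}"

definition restricted_strongly_convex ::
    "nat \<Rightarrow> (real^'n \<Rightarrow> real) \<Rightarrow> (real^'n \<Rightarrow> real^'n) \<Rightarrow> bool" where
  "restricted_strongly_convex s f grad \<longleftrightarrow>
     (\<exists>\<sigma>>0. \<forall>x y. l0 (x - y) \<le> s \<longrightarrow>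
        f y \<ge> f x + grad x \<bullet> (y - x) + \<sigma> / 2 * (norm (x - y))\<^sup>2)"

definition iwht_seq ::
    "nat \<Rightarrow> (real^'n \<Rightarrow> real^'n) \<Rightarrow> real^'n^'n \<Rightarrow> (nat \<Rightarrow> real^'n) \<Rightarrow> bool" where
  "iwht_seq s grad D x \<longleftrightarrow>
     x 0 \<in> sparse_set s \<and>
     (\<forall>k. \<exists>y. y \<in> proj_set (sparse_set s)
                   (diag_sqrt D *v x k - diag_inv_sqrt D *v grad (x k))
              \<and> x (Suc k) = diag_inv_sqrt D *v y)"

end

theory Submission imports Defs begin

text \<open>
  In the scaled coordinates \<open>y = D^(1/2) z\<close> the IWHT step is a projection onto \<open>C_s\<close>; back in
  the original coordinates, \<open>x_(k+1)\<close> minimises over \<open>C_s\<close> the quadratic model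
  \<open>\<nabla>f(x_k)^T (z - x_k) + \<parallel>z - x_k\<parallel>_D^2 / 2\<close> of \<open>f\<close> at \<open>x_k\<close>. Comparing with \<open>z = x_k\<close> and
  using the upper bound with \<open>H \<prec> D\<close> gives the sufficient decrease
  \<open>f(x_(k+1)) \<le> f(x_k) - m/2 \<parallel>x_(k+1) - x_k\<parallel>^2\<close>, while restricted strong convexity makes \<open>f\<close>
  coercive and bounded below on \<open>C_s\<close>; so the iterates are bounded and their steps tend to
  zero. Optimality of the model in each coordinate of the support shows that every limit
  point \<open>p\<close> lies in \<open>C_s\<close> with \<open>\<nabla>f(p)\<close> vanishing on its support, and restricted strong
  convexity shows that such a point is determined by its support. A bounded sequence with
  vanishing steps and finitely many limit points converges.
\<close>

lemma is_diag_diag_sqrt: "is_diag (diag_sqrt D)"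
  and is_diag_diag_inv_sqrt: "is_diag (diag_inv_sqrt D)"
  by (simp_all add: is_diag_def diag_sqrt_def diag_inv_sqrt_def)

lemma is_diag_diff: "is_diag A \<Longrightarrow> is_diag B \<Longrightarrow> is_diag (A - B)"
  by (simp add: is_diag_def)

lemma is_diag_mult_vec: "is_diag A \<Longrightarrow> A *v v = (\<chi> i. A $ i $ i * v $ i)"
proof -
  assume "is_diag A"
  then have "(\<Sum>j\<in>UNIV. A $ i $ j * v $ j) = (\<Sum>j\<in>UNIV. if j = i then A $ i $ i * v $ i else 0)" for i
    unfolding is_diag_def by (intro sum.cong) auto
  then show ?thesis by (simp add: matrix_vector_mult_def vec_eq_iff)
qed

lemma diag_sqrt_mult_vec: "diag_sqrt D *v v = (\<chi> i. sqrt (D $ i $ i) * v $ i)"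
  unfolding is_diag_mult_vec[OF is_diag_diag_sqrt] by (simp add: diag_sqrt_def)

lemma diag_inv_sqrt_mult_vec: "diag_inv_sqrt D *v v = (\<chi> i. v $ i / sqrt (D $ i $ i))"
  unfolding is_diag_mult_vec[OF is_diag_diag_inv_sqrt] by (simp add: diag_inv_sqrt_def)

lemma diag_sqrt_inv_sqrt:
  assumes "\<And>i. D $ i $ i > 0"
  shows "diag_sqrt D *v (diag_inv_sqrt D *v y) = y"
proof -
  have "D $ i $ i \<noteq> 0" for i using assms[of i] by simp
  then show ?thesis by (simp add: diag_sqrt_mult_vec diag_inv_sqrt_mult_vec vec_eq_iff)
qed

lemma norm_power2_eq_sum: "(norm v)\<^sup>2 = (\<Sum>i\<in>UNIV. (v $ i)\<^sup>2)"
  by (simp add: norm_vec_def L2_set_def sum_nonneg)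

lemma inner_vec_eq_zero: "(\<And>i. u $ i = 0 \<or> v $ i = 0) \<Longrightarrow> (u::real^'n) \<bullet> v = 0"
  unfolding inner_vec_def by (intro sum.neutral) auto

lemma wnorm2_diag: "is_diag A \<Longrightarrow> wnorm2 A v = (\<Sum>i\<in>UNIV. A $ i $ i * (v $ i)\<^sup>2)"
  by (simp add: wnorm2_def is_diag_mult_vec inner_vec_def power2_eq_square algebra_simps)

lemma wnorm2_diff: "wnorm2 (A - B) v = wnorm2 A v - wnorm2 B v"
  by (simp add: wnorm2_def matrix_vector_mult_diff_rdistrib inner_diff_right)

lemma pos_def_diag_pos: "pos_def A \<Longrightarrow> A $ i $ i > 0"
proof -
  assume "pos_def A"
  moreover have "axis i (1::real) \<noteq> 0" by (simp add: axis_eq_0_iff)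
  ultimately have "0 < axis i 1 \<bullet> (A *v axis i 1)" by (simp add: pos_def_def)
  then show ?thesis by (simp add: matrix_vector_mult_basis column_def inner_axis')
qed

lemma pos_def_diag_wnorm2_ge:
  assumes "is_diag A" and "pos_def A"
  obtains m where "m > 0" and "\<And>v. m * (norm v)\<^sup>2 \<le> wnorm2 A v"
proof
  let ?m = "Min (range (\<lambda>i. A $ i $ i))"
  show "?m > 0" using pos_def_diag_pos[OF assms(2)] by (subst Min_gr_iff) auto
  have "(\<Sum>i\<in>UNIV. ?m * (v $ i)\<^sup>2) \<le> (\<Sum>i\<in>UNIV. A $ i $ i * (v $ i)\<^sup>2)" for v
    by (intro sum_mono mult_right_mono Min_le) auto
  then show "?m * (norm v)\<^sup>2 \<le> wnorm2 A v" for v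
    by (simp add: wnorm2_diag[OF assms(1)] norm_power2_eq_sum sum_distrib_left)
qed

lemma l0_mono: "{i. y $ i \<noteq> 0} \<subseteq> {i. x $ i \<noteq> 0} \<Longrightarrow> l0 y \<le> l0 x"
  unfolding l0_def by (rule card_mono) auto

lemma l0_cong: "(\<And>i. x $ i = 0 \<longleftrightarrow> y $ i = 0) \<Longrightarrow> l0 x = l0 y"
  unfolding l0_def by metis

lemma l0_diag_sqrt:
  assumes "\<And>i. D $ i $ i > 0"
  shows "l0 (diag_sqrt D *v w) = l0 w" and l0_diag_inv_sqrt: "l0 (diag_inv_sqrt D *v w) = l0 w"
proof -
  have "D $ i $ i \<noteq> 0" for i using assms[of i] by simp
  then show "l0 (diag_sqrt D *v w) = l0 w" "l0 (diag_inv_sqrt D *v w) = l0 w"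
    by (auto intro!: l0_cong simp: diag_sqrt_mult_vec diag_inv_sqrt_mult_vec)
qed

lemma closed_sparse_set: "closed (sparse_set s)"
proof (rule closed_sequential_limits[THEN iffD2], intro allI impI, elim conjE)
  fix x :: "nat \<Rightarrow> real^'n" and p
  assume sparse: "\<forall>k. x k \<in> sparse_set s" and lim: "x \<longlonglongrightarrow> p"
  have "eventually (\<lambda>k. \<forall>i. p $ i \<noteq> 0 \<longrightarrow> x k $ i \<noteq> 0) sequentially"
    using tendsto_imp_eventually_ne[OF tendsto_vec_nth[OF lim]]
    by (intro eventually_all_finite) auto
  then obtain k where "\<forall>i. p $ i \<noteq> 0 \<longrightarrow> x k $ i \<noteq> 0"
    by (auto simp: eventually_sequentially)
  then have "l0 p \<le> l0 (x k)" by (intro l0_mono) auto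
  then show "p \<in> sparse_set s" using sparse order_trans by (fastforce simp: sparse_set_def)
qed

subsection \<open>The IWHT step as a sparse minimiser of a quadratic model\<close>

definition quad_model :: "real^'n^'n \<Rightarrow> real^'n \<Rightarrow> real^'n \<Rightarrow> real^'n \<Rightarrow> real" where
  "quad_model D g v z = g \<bullet> (z - v) + 1/2 * wnorm2 D (z - v)"

lemma quad_model_self [simp]: "quad_model D g v v = 0"
  by (simp add: quad_model_def wnorm2_def)

lemma quad_model_diff: "quad_model D g v z - quad_model H g v z = 1/2 * wnorm2 (D - H) (z - v)"
  by (simp add: quad_model_def wnorm2_diff algebra_simps)

lemma quad_model_add_axis:
  assumes "is_diag D"
  shows "quad_model D g v (u + axis i t)
    = quad_model D g v u + t * (g $ i + D $ i $ i * (u $ i - v $ i)) + D $ i $ i / 2 * t\<^sup>2"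
proof -
  have "wnorm2 D (u + axis i t - v)
      = (\<Sum>j\<in>UNIV. D $ j $ j * ((u - v) $ j)\<^sup>2 + (if j = i then D $ i $ i * (2 * t * (u $ i - v $ i) + t\<^sup>2) else 0))"
    unfolding wnorm2_diag[OF assms] by (intro sum.cong) (auto simp: axis_def power2_eq_square algebra_simps)
  also have "\<dots> = wnorm2 D (u - v) + D $ i $ i * (2 * t * (u $ i - v $ i) + t\<^sup>2)"
    by (simp add: sum.distrib wnorm2_diag[OF assms])
  finally show ?thesis
    by (simp add: quad_model_def inner_axis inner_diff_right inner_add_right algebra_simps)
qed

text \<open>Completing the square coordinatewise: the projection objective of the scaled step is
  an affine function of the model.\<close>

lemma norm_iwht_residual:
  assumes "is_diag D" and D_pos: "\<And>i. D $ i $ i > 0"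
  shows "(norm (diag_sqrt D *v z - (diag_sqrt D *v v - diag_inv_sqrt D *v g)))\<^sup>2
    = 2 * quad_model D g v z + (\<Sum>i\<in>UNIV. (g $ i)\<^sup>2 / D $ i $ i)"
proof -
  have coord: "(sqrt d * a - (sqrt d * b - c / sqrt d))\<^sup>2 = 2 * c * (a - b) + d * (a - b)\<^sup>2 + c\<^sup>2 / d"
    if "d > 0" for d a b c :: real
  proof -
    have "sqrt d * a - (sqrt d * b - c / sqrt d) = (d * (a - b) + c) / sqrt d"
      using that by (simp add: field_simps)
    then show ?thesis using that by (simp add: power_divide field_simps power2_eq_square)
  qed
  have "(norm (diag_sqrt D *v z - (diag_sqrt D *v v - diag_inv_sqrt D *v g)))\<^sup>2
      = (\<Sum>i\<in>UNIV. (sqrt (D $ i $ i) * z $ i - (sqrt (D $ i $ i) * v $ i - g $ i / sqrt (D $ i $ i)))\<^sup>2)"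
    by (simp add: norm_power2_eq_sum diag_sqrt_mult_vec diag_inv_sqrt_mult_vec)
  also have "\<dots> = (\<Sum>i\<in>UNIV. 2 * g $ i * (z $ i - v $ i) + D $ i $ i * (z $ i - v $ i)\<^sup>2 + (g $ i)\<^sup>2 / D $ i $ i)"
    by (rule sum.cong[OF refl coord[OF D_pos]])
  also have "\<dots> = 2 * quad_model D g v z + (\<Sum>i\<in>UNIV. (g $ i)\<^sup>2 / D $ i $ i)"
    by (simp add: quad_model_def wnorm2_diag[OF assms(1)] inner_vec_def sum.distrib sum_distrib_left
        mult.assoc)
  finally show ?thesis .
qed

lemma iwht_step_minimizes:
  assumes "is_diag D" and D_pos: "\<And>i. D $ i $ i > 0"
    and y: "y \<in> proj_set (sparse_set s) (diag_sqrt D *v v - diag_inv_sqrt D *v g)"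
  shows "diag_inv_sqrt D *v y \<in> sparse_set s"
    and "z \<in> sparse_set s \<Longrightarrow> quad_model D g v (diag_inv_sqrt D *v y) \<le> quad_model D g v z"
proof -
  let ?u = "diag_inv_sqrt D *v y" and ?c = "diag_sqrt D *v v - diag_inv_sqrt D *v g"
  have y_sparse: "y \<in> sparse_set s"
    and y_min: "\<And>y'. y' \<in> sparse_set s \<Longrightarrow> (norm (y - ?c))\<^sup>2 \<le> (norm (y' - ?c))\<^sup>2"
    using y by (auto simp: proj_set_def)
  then show "?u \<in> sparse_set s" by (simp add: sparse_set_def l0_diag_inv_sqrt[OF D_pos])
  assume "z \<in> sparse_set s"
  then have "diag_sqrt D *v z \<in> sparse_set s" by (simp add: sparse_set_def l0_diag_sqrt[OF D_pos])
  from y_min[OF this] have "(norm (diag_sqrt D *v ?u - ?c))\<^sup>2 \<le> (norm (diag_sqrt D *v z - ?c))\<^sup>2"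
    by (simp add: diag_sqrt_inv_sqrt[OF D_pos])
  then show "quad_model D g v ?u \<le> quad_model D g v z"
    by (simp add: norm_iwht_residual[OF assms(1,2)])
qed

lemma iwht_seq_sparse_minimizer:
  assumes iter: "iwht_seq s grad D x" and "is_diag D" and D_pos: "\<And>i. D $ i $ i > 0"
  shows "x k \<in> sparse_set s"
    and "z \<in> sparse_set s \<Longrightarrow>
      quad_model D (grad (x k)) (x k) (x (Suc k)) \<le> quad_model D (grad (x k)) (x k) z"
proof -
  have step: "\<exists>y. y \<in> proj_set (sparse_set s) (diag_sqrt D *v x j - diag_inv_sqrt D *v grad (x j))
      \<and> x (Suc j) = diag_inv_sqrt D *v y" for j
    using iter by (simp add: iwht_seq_def)
  then show "z \<in> sparse_set s \<Longrightarrow>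
      quad_model D (grad (x k)) (x k) (x (Suc k)) \<le> quad_model D (grad (x k)) (x k) z"
    using iwht_step_minimizes(2)[OF assms(2) D_pos] by metis
  show "x k \<in> sparse_set s"
  proof (cases k)
    case 0
    then show ?thesis using iter by (simp add: iwht_seq_def)
  next
    case (Suc j)
    then show ?thesis using step[of j] iwht_step_minimizes(1)[OF assms(2) D_pos] by metis
  qed
qed

text \<open>Moving the \<open>i\<close>-th coordinate of a minimiser inside its support stays in \<open>C\<^sub>s\<close>; the best
  such move would lower the model by \<open>c\<^sup>2 / (2 D\<^sub>i\<^sub>i)\<close>, where \<open>c\<close> is the left-hand side below.\<close>

lemma sparse_quad_model_min_stationary:
  assumes "is_diag D" and d_pos: "D $ i $ i > 0" and u: "u \<in> sparse_set s"
    and min: "\<And>z. z \<in> sparse_set s \<Longrightarrow> quad_model D g v u \<le> quad_model D g v z"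
    and "u $ i \<noteq> 0"
  shows "g $ i + D $ i $ i * (u $ i - v $ i) = 0"
proof -
  define c where "c = g $ i + D $ i $ i * (u $ i - v $ i)"
  define t where "t = - c / D $ i $ i"
  have "{j. (u + axis i t) $ j \<noteq> 0} \<subseteq> {j. u $ j \<noteq> 0}"
    using \<open>u $ i \<noteq> 0\<close> by (auto simp: axis_def)
  then have "l0 (u + axis i t) \<le> l0 u" by (rule l0_mono)
  with u have "u + axis i t \<in> sparse_set s" by (simp add: sparse_set_def)
  from min[OF this] have "0 \<le> t * c + D $ i $ i / 2 * t\<^sup>2"
    by (simp add: quad_model_add_axis[OF assms(1)] c_def)
  also have "\<dots> = - c\<^sup>2 / (2 * D $ i $ i)"
    using d_pos by (simp add: t_def field_simps power2_eq_square)
  finally have "c\<^sup>2 \<le> 0"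
    using d_pos by (simp add: divide_le_0_iff)
  then show ?thesis by (simp add: c_def)
qed

subsection \<open>Sufficient decrease\<close>

lemma quad_model_descent:
  assumes upper: "f u \<le> f v + quad_model H g v u"
    and decrease: "quad_model D g v u \<le> 0"
    and gap: "m * (norm (u - v))\<^sup>2 \<le> wnorm2 (D - H) (u - v)"
  shows "f u \<le> f v - m / 2 * (norm (u - v))\<^sup>2"
  using quad_model_diff[of D g v u H] assms by linarith

lemma iwht_sufficient_decrease:
  assumes iter: "iwht_seq s grad D x" and "is_diag D" and "\<And>i. D $ i $ i > 0"
    and upper: "\<And>u v. f v \<le> f u + grad u \<bullet> (v - u) + 1/2 * wnorm2 H (v - u)"
    and gap: "\<And>v. m * (norm v)\<^sup>2 \<le> wnorm2 (D - H) v"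
  shows "f (x (Suc k)) \<le> f (x k) - m / 2 * (norm (x (Suc k) - x k))\<^sup>2"
proof (rule quad_model_descent[OF _ _ gap])
  show "f (x (Suc k)) \<le> f (x k) + quad_model H (grad (x k)) (x k) (x (Suc k))"
    using upper[where u = "x k" and v = "x (Suc k)"] by (simp add: quad_model_def)
  show "quad_model D (grad (x k)) (x k) (x (Suc k)) \<le> 0"
    using iwht_seq_sparse_minimizer[OF assms(1-3)] by (metis quad_model_self)
qed

lemma decseq_of_sufficient_decrease:
  assumes "m \<ge> 0" and "\<And>k. f (x (Suc k)) \<le> f (x k) - m * (norm (x (Suc k) - x k))\<^sup>2"
  shows "decseq (\<lambda>k. f (x k))"
proof (rule decseq_SucI)
  fix k
  have "0 \<le> m * (norm (x (Suc k) - x k))\<^sup>2" using assms(1) by simp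
  then show "f (x (Suc k)) \<le> f (x k)" using assms(2)[of k] by linarith
qed

lemma descent_steps_tendsto_zero:
  fixes x :: "nat \<Rightarrow> 'a::real_normed_vector"
  assumes "m > 0"
    and desc: "\<And>k. f (x (Suc k)) \<le> f (x k) - m * (norm (x (Suc k) - x k))\<^sup>2"
    and "bdd_below (range (\<lambda>k. f (x k)))"
  shows "(\<lambda>k. x (Suc k) - x k) \<longlonglongrightarrow> 0"
proof (rule Lim_null_comparison)
  have "decseq (\<lambda>k. f (x k))"
    using decseq_of_sufficient_decrease[of m f x] \<open>m > 0\<close> desc by simp
  then obtain L where "(\<lambda>k. f (x k)) \<longlonglongrightarrow> L"
    using decseq_convergent \<open>bdd_below _\<close> by (metis bdd_below.E rangeI)
  then have "(\<lambda>k. f (x k) - f (x (Suc k))) \<longlonglongrightarrow> L - L"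
    by (intro tendsto_diff LIMSEQ_Suc)
  then have "(\<lambda>k. (f (x k) - f (x (Suc k))) / m) \<longlonglongrightarrow> 0"
    by (simp add: tendsto_divide_zero)
  then show "(\<lambda>k. sqrt ((f (x k) - f (x (Suc k))) / m)) \<longlonglongrightarrow> 0"
    by (metis real_sqrt_zero tendsto_real_sqrt)
  have "norm (x (Suc k) - x k) \<le> sqrt ((f (x k) - f (x (Suc k))) / m)" for k
    using desc[of k] \<open>m > 0\<close> by (intro real_le_rsqrt) (simp add: field_simps)
  then show "eventually (\<lambda>k. norm (x (Suc k) - x k) \<le> sqrt ((f (x k) - f (x (Suc k))) / m)) sequentially"
    by simp
qed

subsection \<open>Restricted strong convexity on sparse vectors\<close>

lemma le_of_quadratic_le:
  fixes a b c t :: real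
  assumes "a > 0" "b \<ge> 0" "c \<ge> 0" and quad: "a * t\<^sup>2 \<le> b * t + c"
  shows "t \<le> max 1 ((b + c) / a)"
proof (cases "t \<le> 1")
  case False
  then have "c \<le> c * t" using \<open>c \<ge> 0\<close> by (simp add: mult_le_cancel_left1)
  then have "(a * t) * t \<le> (b + c) * t"
    using quad by (simp add: power2_eq_square algebra_simps)
  then have "a * t \<le> b + c" using False by (simp add: mult_right_le_imp_le)
  then show ?thesis using \<open>a > 0\<close> by (simp add: le_max_iff_disj pos_le_divide_eq mult.commute)
qed simp

lemma rsc_sparse_lower_bound:
  assumes rsc: "\<And>u v. l0 (u - v) \<le> s \<Longrightarrow> f v \<ge> f u + grad u \<bullet> (v - u) + \<sigma> / 2 * (norm (u - v))\<^sup>2"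
    and "z \<in> sparse_set s"
  shows "f 0 - norm (grad 0) * norm z + \<sigma> / 2 * (norm z)\<^sup>2 \<le> f z"
proof -
  have "l0 (0 - z) = l0 z" by (rule l0_cong) simp
  then have "l0 (0 - z) \<le> s" using assms(2) by (simp add: sparse_set_def)
  from rsc[OF this] have "f 0 + grad 0 \<bullet> z + \<sigma> / 2 * (norm z)\<^sup>2 \<le> f z" by simp
  moreover have "- (norm (grad 0) * norm z) \<le> grad 0 \<bullet> z"
    using norm_cauchy_schwarz[of "- grad 0" z] by simp
  ultimately show ?thesis by linarith
qed

lemma rsc_sparse_sublevel_bounded:
  assumes "restricted_strongly_convex s f grad"
  shows "bounded {z \<in> sparse_set s. f z \<le> c}"
proof -
  obtain \<sigma> where "\<sigma> > 0" and rsc: "\<And>u v. l0 (u - v) \<le> s \<Longrightarrow>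
      f v \<ge> f u + grad u \<bullet> (v - u) + \<sigma> / 2 * (norm (u - v))\<^sup>2"
    using assms unfolding restricted_strongly_convex_def by blast
  let ?G = "norm (grad 0)" and ?C = "\<bar>c - f 0\<bar>"
  have "norm z \<le> max 1 ((?G + ?C) / (\<sigma> / 2))" if "z \<in> sparse_set s" "f z \<le> c" for z
  proof (rule le_of_quadratic_le)
    show "\<sigma> / 2 * (norm z)\<^sup>2 \<le> ?G * norm z + ?C"
      using rsc_sparse_lower_bound[OF rsc that(1)] that(2) abs_ge_self[of "c - f 0"] by linarith
  qed (use \<open>\<sigma> > 0\<close> in auto)
  then show ?thesis by (intro boundedI) blast
qed

lemma rsc_sparse_bdd_below:
  assumes "restricted_strongly_convex s f grad"
  shows "bdd_below (f ` sparse_set s)"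
proof -
  obtain \<sigma> where \<sigma>: "\<sigma> > 0" and rsc: "\<And>u v. l0 (u - v) \<le> s \<Longrightarrow>
      f v \<ge> f u + grad u \<bullet> (v - u) + \<sigma> / 2 * (norm (u - v))\<^sup>2"
    using assms unfolding restricted_strongly_convex_def by blast
  let ?G = "norm (grad 0)"
  have "f 0 - ?G\<^sup>2 / (2 * \<sigma>) \<le> f z" if "z \<in> sparse_set s" for z
  proof -
    have "\<sigma> / 2 * (norm z)\<^sup>2 - ?G * norm z + ?G\<^sup>2 / (2 * \<sigma>) = (\<sigma> * norm z - ?G)\<^sup>2 / (2 * \<sigma>)"
      using \<sigma> by (simp add: field_simps power2_eq_square)
    also have "\<dots> \<ge> 0" using \<sigma> by simp
    finally show ?thesis using rsc_sparse_lower_bound[OF rsc that] by linarith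
  qed
  then show ?thesis by (intro bdd_belowI2)
qed

definition sparse_stationary_points :: "nat \<Rightarrow> (real^'n \<Rightarrow> real^'n) \<Rightarrow> (real^'n) set" where
  "sparse_stationary_points s grad = {p \<in> sparse_set s. \<forall>i. p $ i \<noteq> 0 \<longrightarrow> grad p $ i = 0}"

text \<open>Restricted strong convexity applied in both directions; the linear terms vanish because
  each gradient is zero on the common support.\<close>

lemma sparse_stationary_points_eq:
  assumes "restricted_strongly_convex s f grad"
    and p: "p \<in> sparse_stationary_points s grad" and q: "q \<in> sparse_stationary_points s grad"
    and same_support: "\<And>i. p $ i = 0 \<longleftrightarrow> q $ i = 0"
  shows "p = q"
proof -
  obtain \<sigma> where "\<sigma> > 0" and rsc: "\<And>u v. l0 (u - v) \<le> s \<Longrightarrow>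
      f v \<ge> f u + grad u \<bullet> (v - u) + \<sigma> / 2 * (norm (u - v))\<^sup>2"
    using assms(1) unfolding restricted_strongly_convex_def by blast
  have "l0 p \<le> s" using p by (simp add: sparse_stationary_points_def sparse_set_def)
  moreover have "l0 (p - q) \<le> l0 p" "l0 (q - p) \<le> l0 p"
    using same_support by (auto intro!: l0_mono)
  ultimately have sparse_diff: "l0 (p - q) \<le> s" "l0 (q - p) \<le> s" by linarith+
  have "grad p $ i = 0 \<or> (q - p) $ i = 0" "grad q $ i = 0 \<or> (p - q) $ i = 0" for i
    using p q same_support[of i] by (auto simp: sparse_stationary_points_def)
  then have "grad p \<bullet> (q - p) = 0" "grad q \<bullet> (p - q) = 0" by (meson inner_vec_eq_zero)+
  with rsc[OF sparse_diff(1)] rsc[OF sparse_diff(2)]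
  have "f p + \<sigma> / 2 * (norm (p - q))\<^sup>2 \<le> f q" "f q + \<sigma> / 2 * (norm (q - p))\<^sup>2 \<le> f p"
    by simp_all
  then have "\<sigma> * (norm (p - q))\<^sup>2 \<le> 0" by (simp add: norm_minus_commute)
  then show "p = q" using \<open>\<sigma> > 0\<close> by (simp add: mult_le_0_iff)
qed

lemma finite_sparse_stationary_points:
  assumes "restricted_strongly_convex s f grad"
  shows "finite (sparse_stationary_points s grad)"
proof (rule inj_on_finite[where f = "\<lambda>p. {i. p $ i \<noteq> 0}"])
  show "inj_on (\<lambda>p. {i. p $ i \<noteq> 0}) (sparse_stationary_points s grad)"
  proof (rule inj_onI)
    fix p q
    assume "p \<in> sparse_stationary_points s grad" "q \<in> sparse_stationary_points s grad"
      and "{i. p $ i \<noteq> 0} = {i. q $ i \<noteq> 0}"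
    then show "p = q" by (intro sparse_stationary_points_eq[OF assms]) (auto simp: set_eq_iff)
  qed
qed auto

subsection \<open>Sequences with finitely many limit points\<close>

lemma tendsto_Suc_subseq:
  assumes "(\<lambda>k. x (Suc k) - x k) \<longlonglongrightarrow> 0" and "strict_mono r" and "(x \<circ> r) \<longlonglongrightarrow> p"
  shows "(\<lambda>j. x (Suc (r j))) \<longlonglongrightarrow> (p :: 'a::real_normed_vector)"
proof -
  have "(\<lambda>j. x (r j) + (x (Suc (r j)) - x (r j))) \<longlonglongrightarrow> p + 0"
    using assms(3) LIMSEQ_subseq_LIMSEQ[OF assms(1,2)] by (intro tendsto_add) (simp_all add: o_def)
  then show ?thesis by simp
qed

lemma eventually_near_limit_points:
  fixes x :: "nat \<Rightarrow> 'a::heine_borel"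
  assumes bnd: "bounded (range x)"
    and lim: "\<And>r p. strict_mono r \<Longrightarrow> (x \<circ> r) \<longlonglongrightarrow> p \<Longrightarrow> p \<in> A"
    and "\<rho> > 0"
  shows "eventually (\<lambda>k. \<exists>a\<in>A. dist (x k) a < \<rho>) sequentially"
proof (rule ccontr)
  let ?far = "{k. \<not> (\<exists>a\<in>A. dist (x k) a < \<rho>)}"
  assume "\<not> ?thesis"
  then have "frequently (\<lambda>k. k \<in> ?far) sequentially"
    by (simp only: not_eventually mem_Collect_eq)
  then have "infinite ?far"
    unfolding cofinite_eq_sequentially[symmetric] frequently_cofinite by simp
  then obtain r :: "nat \<Rightarrow> nat" where r: "strict_mono r" and far: "\<And>n. r n \<in> ?far"
    using infinite_enumerate by blast
  have "bounded (range (x \<circ> r))" using bnd by (rule bounded_subset) auto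
  then obtain p and r' :: "nat \<Rightarrow> nat" where r': "strict_mono r'" and p: "(x \<circ> r \<circ> r') \<longlonglongrightarrow> p"
    using bounded_imp_convergent_subsequence by blast
  have "p \<in> A" using lim[of "r \<circ> r'" p] strict_mono_o[OF r r'] p by (simp add: o_assoc)
  obtain n where "dist ((x \<circ> r \<circ> r') n) p < \<rho>"
    using tendstoD[OF p \<open>\<rho> > 0\<close>] unfolding eventually_sequentially by blast
  moreover have "\<not> dist (x (r (r' n))) p < \<rho>" using far[of "r' n"] \<open>p \<in> A\<close> by blast
  ultimately show False by simp
qed

lemma finite_set_separated:
  fixes A :: "'a::metric_space set"
  assumes "finite A"
  obtains \<delta> where "\<delta> > 0" and "\<And>a b. a \<in> A \<Longrightarrow> b \<in> A \<Longrightarrow> a \<noteq> b \<Longrightarrow> \<delta> \<le> dist a b"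
proof
  define dists where "dists = insert 1 ((\<lambda>(a, b). dist a b) ` (A \<times> A - Id))"
  have "finite dists" unfolding dists_def using assms by simp
  moreover have "d > 0" if "d \<in> dists" for d
    using that unfolding dists_def by auto
  ultimately show "Min dists > 0" by (simp add: dists_def)
  show "Min dists \<le> dist a b" if "a \<in> A" "b \<in> A" "a \<noteq> b" for a b
  proof (rule Min_le)
    show "finite dists" by fact
    show "dist a b \<in> dists" using that unfolding dists_def by force
  qed
qed

text \<open>Once the steps are shorter than a quarter of the minimal distance \<open>\<delta>\<close> between points of \<open>A\<close>
  and every iterate is within \<open>\<delta>/4\<close> of \<open>A\<close>, the iterates can no longer switch from one point of
  \<open>A\<close> to another.\<close>

lemma convergent_if_finite_limit_points:
  fixes x :: "nat \<Rightarrow> 'a::{heine_borel, real_normed_vector}"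
  assumes bnd: "bounded (range x)" and "finite A"
    and steps: "(\<lambda>k. x (Suc k) - x k) \<longlonglongrightarrow> 0"
    and lim: "\<And>r p. strict_mono r \<Longrightarrow> (x \<circ> r) \<longlonglongrightarrow> p \<Longrightarrow> p \<in> A"
  shows "convergent x"
proof -
  obtain \<delta> where "\<delta> > 0" and sep: "\<And>a b. a \<in> A \<Longrightarrow> b \<in> A \<Longrightarrow> a \<noteq> b \<Longrightarrow> \<delta> \<le> dist a b"
    using finite_set_separated[OF \<open>finite A\<close>] by blast
  have unique: "a = b" if "a \<in> A" "b \<in> A" "dist y a < \<delta> / 2" "dist y b < \<delta> / 2" for y a b
    using sep[OF that(1,2)] dist_triangle_half_r[OF that(3,4)] by (meson not_le)
  have near: "eventually (\<lambda>k. \<exists>a\<in>A. dist (x k) a < \<rho>) sequentially" if "\<rho> > 0" for \<rho>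
    using eventually_near_limit_points[OF bnd lim that] .
  have "eventually (\<lambda>k. (\<exists>a\<in>A. dist (x k) a < \<delta> / 4) \<and> dist (x (Suc k)) (x k) < \<delta> / 4) sequentially"
    using near[of "\<delta> / 4"] tendstoD[OF steps, of "\<delta> / 4"] \<open>\<delta> > 0\<close>
    by (simp add: dist_norm eventually_conj)
  then obtain N where N: "\<And>k. k \<ge> N \<Longrightarrow>
      (\<exists>a\<in>A. dist (x k) a < \<delta> / 4) \<and> dist (x (Suc k)) (x k) < \<delta> / 4"
    unfolding eventually_sequentially by blast
  obtain a where "a \<in> A" "dist (x N) a < \<delta> / 4" using N[of N] by blast
  have stay: "dist (x k) a < \<delta> / 4" if "k \<ge> N" for k
    using that
  proof (induction k rule: dec_induct)
    case base
    show ?case by fact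
  next
    case (step k)
    have "Suc k \<ge> N" using step(1) by simp
    then obtain b where "b \<in> A" and b: "dist (x (Suc k)) b < \<delta> / 4" using N by blast
    have "dist (x (Suc k)) a < \<delta> / 2"
      using dist_triangle[of "x (Suc k)" a "x k"] N[OF step(1)] step(3) by linarith
    moreover have "dist (x (Suc k)) b < \<delta> / 2" using b \<open>\<delta> > 0\<close> by simp
    ultimately have "a = b" by (rule unique[OF \<open>a \<in> A\<close> \<open>b \<in> A\<close>])
    then show ?case using b by simp
  qed
  have "x \<longlonglongrightarrow> a"
  proof (rule tendstoI)
    fix \<epsilon> :: real
    assume "\<epsilon> > 0"
    then have "eventually (\<lambda>k. k \<ge> N \<and> (\<exists>b\<in>A. dist (x k) b < min \<epsilon> (\<delta> / 4))) sequentially"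
      using eventually_ge_at_top near[of "min \<epsilon> (\<delta> / 4)"] \<open>\<delta> > 0\<close> by (intro eventually_conj) auto
    then show "eventually (\<lambda>k. dist (x k) a < \<epsilon>) sequentially"
    proof (rule eventually_mono)
      fix k
      assume "k \<ge> N \<and> (\<exists>b\<in>A. dist (x k) b < min \<epsilon> (\<delta> / 4))"
      then obtain b where "k \<ge> N" "b \<in> A" and b: "dist (x k) b < min \<epsilon> (\<delta> / 4)" by blast
      have "dist (x k) a < \<delta> / 2" "dist (x k) b < \<delta> / 2"
        using stay[OF \<open>k \<ge> N\<close>] b \<open>\<delta> > 0\<close> by auto
      then have "a = b" by (rule unique[OF \<open>a \<in> A\<close> \<open>b \<in> A\<close>])
      then show "dist (x k) a < \<epsilon>" using b by simp
    qed
  qed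
  then show ?thesis by (auto simp: convergent_def)
qed

lemma limit_sparse_stationary:
  fixes D :: "real^'n^'n"
  assumes grad_cont: "continuous_on UNIV grad"
    and u: "u \<longlonglongrightarrow> p" and w: "w \<longlonglongrightarrow> p" and sparse: "\<And>j. w j \<in> sparse_set s"
    and stat: "\<And>j i. w j $ i \<noteq> 0 \<Longrightarrow> grad (u j) $ i + D $ i $ i * (w j $ i - u j $ i) = 0"
  shows "p \<in> sparse_stationary_points s grad"
proof -
  have "p \<in> sparse_set s" using closed_sparse_set sparse w by (rule closed_sequentially)
  moreover have "grad p $ i = 0" if "p $ i \<noteq> 0" for i
  proof -
    have lim_grad: "(\<lambda>j. grad (u j) $ i) \<longlonglongrightarrow> grad p $ i"
      by (intro tendsto_vec_nth continuous_on_tendsto_compose[OF grad_cont u]) auto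
    have "(\<lambda>j. - (D $ i $ i * (w j $ i - u j $ i))) \<longlonglongrightarrow> - (D $ i $ i * (p $ i - p $ i))"
      by (intro tendsto_intros tendsto_vec_nth u w)
    then have lim_step: "(\<lambda>j. - (D $ i $ i * (w j $ i - u j $ i))) \<longlonglongrightarrow> 0" by simp
    have "eventually (\<lambda>j. w j $ i \<noteq> 0) sequentially"
      using tendsto_imp_eventually_ne[OF tendsto_vec_nth[OF w] that] .
    then have "eventually (\<lambda>j. - (D $ i $ i * (w j $ i - u j $ i)) = grad (u j) $ i) sequentially"
    proof (rule eventually_mono)
      fix j
      assume "w j $ i \<noteq> 0"
      from stat[OF this] show "- (D $ i $ i * (w j $ i - u j $ i)) = grad (u j) $ i" by linarith
    qed
    from Lim_transform_eventually[OF lim_step this] show ?thesis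
      by (rule LIMSEQ_unique[OF lim_grad])
  qed
  ultimately show ?thesis by (simp add: sparse_stationary_points_def)
qed

lemma iwht_limit_points_stationary:
  assumes iter: "iwht_seq s grad D x" and D_diag: "is_diag D" and D_pos: "\<And>i. D $ i $ i > 0"
    and grad_cont: "continuous_on UNIV grad"
    and steps: "(\<lambda>k. x (Suc k) - x k) \<longlonglongrightarrow> 0"
    and "strict_mono r" and "(x \<circ> r) \<longlonglongrightarrow> p"
  shows "p \<in> sparse_stationary_points s grad"
proof (rule limit_sparse_stationary[OF grad_cont])
  note sparse = iwht_seq_sparse_minimizer(1)[OF iter D_diag D_pos]
  note minimal = iwht_seq_sparse_minimizer(2)[OF iter D_diag D_pos]
  show "(\<lambda>j. x (r j)) \<longlonglongrightarrow> p" using \<open>(x \<circ> r) \<longlonglongrightarrow> p\<close> by (simp add: o_def)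
  show "(\<lambda>j. x (Suc (r j))) \<longlonglongrightarrow> p" using tendsto_Suc_subseq[OF steps assms(6,7)] .
  show "x (Suc (r j)) \<in> sparse_set s" for j by (rule sparse)
  show "grad (x (r j)) $ i + D $ i $ i * (x (Suc (r j)) $ i - x (r j) $ i) = 0"
    if "x (Suc (r j)) $ i \<noteq> 0" for j i
    using sparse_quad_model_min_stationary[OF D_diag D_pos sparse minimal that] .
qed

theorem proposition4p7:
  fixes f :: "real^'n \<Rightarrow> real"
    and grad :: "real^'n \<Rightarrow> real^'n"
    and H D :: "real^'n^'n"
    and s :: nat
    and x :: "nat \<Rightarrow> real^'n"
  assumes grad: "\<And>z. (f has_derivative (\<lambda>h. grad z \<bullet> h)) (at z)"
    and grad_cont: "continuous_on UNIV grad"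
    and cvx: "convex_on UNIV f"
    and H_diag: "is_diag H" and H_nonneg: "\<And>i. H $ i $ i \<ge> 0"
    and upper: "\<And>u v. f v \<le> f u + grad u \<bullet> (v - u) + 1/2 * wnorm2 H (v - u)"
    and D_diag: "is_diag D" and D_H: "pos_def (D - H)"
    and s_pos: "s \<ge> 1"
    and rsc: "restricted_strongly_convex s f grad"
    and iter: "iwht_seq s grad D x"
  shows "convergent x"
proof -
  have D_pos: "D $ i $ i > 0" for i
    using pos_def_diag_pos[OF D_H, of i] H_nonneg[of i] by simp
  obtain m where "m > 0" and gap: "\<And>v. m * (norm v)\<^sup>2 \<le> wnorm2 (D - H) v"
    using pos_def_diag_wnorm2_ge[OF is_diag_diff[OF D_diag H_diag] D_H] by blast
  note sparse = iwht_seq_sparse_minimizer(1)[OF iter D_diag D_pos]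
  have decrease: "f (x (Suc k)) \<le> f (x k) - m / 2 * (norm (x (Suc k) - x k))\<^sup>2" for k
    using iwht_sufficient_decrease[OF iter D_diag D_pos upper gap] .
  have "bdd_below (range (\<lambda>k. f (x k)))"
    by (rule bdd_below_mono[OF rsc_sparse_bdd_below[OF rsc]]) (use sparse in auto)
  with \<open>m > 0\<close> decrease have steps: "(\<lambda>k. x (Suc k) - x k) \<longlonglongrightarrow> 0"
    by (intro descent_steps_tendsto_zero[of "m / 2"]) auto
  have "decseq (\<lambda>k. f (x k))"
    using decseq_of_sufficient_decrease[of "m / 2" f x] \<open>m > 0\<close> decrease by simp
  then have "range x \<subseteq> {z \<in> sparse_set s. f z \<le> f (x 0)}" using sparse by (auto simp: decseq_def)
  then have bounded: "bounded (range x)" by (rule bounded_subset[OF rsc_sparse_sublevel_bounded[OF rsc]])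
  show ?thesis
    using convergent_if_finite_limit_points[OF bounded finite_sparse_stationary_points[OF rsc] steps]
      iwht_limit_points_stationary[OF iter D_diag D_pos grad_cont steps] by blast
qed

end
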